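(* Let $m\ge1$. The $0/1$ matrices $\mathcal{M}^{t,p}_{i,j}$ ($(i,j,t,p)\in\mathcal{I}_{(m,m)}$), $\mathcal{R}^{t,p}_{i,j}$ ($(i,j,t,p)\in\mathcal{I}_{(m,m+1)}$), $\mathcal{L}^{t,p}_{i,j}$ ($(i,j,t,p)\in\mathcal{I}_{(m+1,m)}$) and $\mathcal{F}^{t,p}_{i,j}$ ($(i,j,t,p)\in\mathcal{I}_{(m+1,m+1)}$) form a basis of the centralizer algebra $\mathcal{A}$, and $\dim\mathcal{A}=4\binom{m+4}{4}$.
   Context: $S=\{1,\dots,2m+1\}$, $X=\binom{S}{m}\cup\binom{S}{m+1}$ (vertex set of the doubled Odd graph $2.O_{m+1}$, in which two vertices are adjacent iff one is a proper subset of the other), $x_0=\{1,\dots,m\}$. $G=\mathrm{Sym}(x_0)\times\mathrm{Sym}(S\setminus x_0)$ (the stabilizer of $x_0$ in $\mathrm{Aut}(2.O_{m+1})$). The centralizer algebra $\mathcal{A}$ is the set of complex matrices $B$ with rows and columns indexed by $X$ such that $B_{\sigma(y),\sigma(z)}=B_{y,z}$ for all $\sigma\in G$, $y,z\in X$. For $y,z\subseteq S$, $\varrho(y,z)=(|x_0\cap y|,|x_0\cap z|,|y\cap z|,|x_0\cap y\cap z|)$; for $a,b\in\{m,m+1\}$, $\mathcal{I}_{(a,b)}=\{\varrho(y,z):y\in\binom{S}{a},z\in\binom{S}{b}\}$ and $X^{(i,j,t,p)}_{(a,b)}=\{(y,z)\in\binom{S}{a}\times\binom{S}{b}:\varrho(y,z)=(i,j,t,p)\}$.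 The matrices $\mathcal{M}^{t,p}_{i,j}$ (type I), $\mathcal{R}^{t,p}_{i,j}$ (type II), $\mathcal{L}^{t,p}_{i,j}$ (type III), $\mathcal{F}^{t,p}_{i,j}$ (type IV) are the $X\times X$ matrices whose $(y,z)$-entry is $1$ if $(y,z)$ lies in $X^{(i,j,t,p)}_{(m,m)}$, $X^{(i,j,t,p)}_{(m,m+1)}$, $X^{(i,j,t,p)}_{(m+1,m)}$, $X^{(i,j,t,p)}_{(m+1,m+1)}$ respectively, and $0$ otherwise. *)

theory Defs
  imports "HOL-Analysis.Analysis" "HOL-Library.Function_Algebras"
begin

type_synonym mat = "nat set \<Rightarrow> nat set \<Rightarrow> complex"

definition Sset :: "nat \<Rightarrow> nat set" where "Sset m = {1..2*m+1}"

definition ksub :: "nat set \<Rightarrow> nat \<Rightarrow> nat set set" where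
  "ksub A k = {y. y \<subseteq> A \<and> card y = k}"

definition Xset :: "nat \<Rightarrow> nat set set" where
  "Xset m = ksub (Sset m) m \<union> ksub (Sset m) (m+1)"

definition x0 :: "nat \<Rightarrow> nat set" where "x0 m = {1..m}"

definition Ggrp :: "nat \<Rightarrow> (nat \<Rightarrow> nat) set" where
  "Ggrp m = {\<sigma>. bij_betw \<sigma> (Sset m) (Sset m) \<and> \<sigma> ` x0 m = x0 m \<and> (\<forall>x. x \<notin> Sset m \<longrightarrow> \<sigma> x = x)}"

definition Xmats :: "nat \<Rightarrow> mat set" where
  "Xmats m = {B. \<forall>y z. (y \<notin> Xset m \<or> z \<notin> Xset m) \<longrightarrow> B y z = 0}"

definition centralizer :: "nat \<Rightarrow> mat set" where
  "centralizer m = {B \<in> Xmats m. \<forall>\<sigma>\<in>Ggrp m. \<forall>y\<in>Xset m. \<forall>z\<in>Xset m.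
       B (\<sigma> ` y) (\<sigma> ` z) = B y z}"

definition rho :: "nat \<Rightarrow> nat set \<Rightarrow> nat set \<Rightarrow> nat \<times> nat \<times> nat \<times> nat" where
  "rho m y z = (card (x0 m \<inter> y), card (x0 m \<inter> z), card (y \<inter> z), card (x0 m \<inter> y \<inter> z))"

definition Iset :: "nat \<Rightarrow> nat \<Rightarrow> nat \<Rightarrow> (nat \<times> nat \<times> nat \<times> nat) set" where
  "Iset m a b = {rho m y z | y z. y \<in> ksub (Sset m) a \<and> z \<in> ksub (Sset m) b}"

definition orbmat :: "nat \<Rightarrow> nat \<Rightarrow> nat \<Rightarrow> nat \<times> nat \<times> nat \<times> nat \<Rightarrow> mat" where
  "orbmat m a b q = (\<lambda>y z. if y \<in> ksub (Sset m) a \<and> z \<in> ksub (Sset m) b \<and> rho m y z = q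
                            then 1 else 0)"

definition Mmat :: "nat \<Rightarrow> nat \<times> nat \<times> nat \<times> nat \<Rightarrow> mat" where "Mmat m = orbmat m m m"
definition Rmat :: "nat \<Rightarrow> nat \<times> nat \<times> nat \<times> nat \<Rightarrow> mat" where "Rmat m = orbmat m m (m+1)"
definition Lmat :: "nat \<Rightarrow> nat \<times> nat \<times> nat \<times> nat \<Rightarrow> mat" where "Lmat m = orbmat m (m+1) m"
definition Fmat :: "nat \<Rightarrow> nat \<times> nat \<times> nat \<times> nat \<Rightarrow> mat" where "Fmat m = orbmat m (m+1) (m+1)"

text \<open>Index set of the whole family: type tag 0..3 (I,II,III,IV) together with the parameter.\<close>
definition basisIdx :: "nat \<Rightarrow> (nat \<times> (nat \<times> nat \<times> nat \<times> nat)) set" where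
  "basisIdx m = ({0} \<times> Iset m m m) \<union> ({1} \<times> Iset m m (m+1))
              \<union> ({2} \<times> Iset m (m+1) m) \<union> ({3} \<times> Iset m (m+1) (m+1))"

definition basisMat :: "nat \<Rightarrow> nat \<times> (nat \<times> nat \<times> nat \<times> nat) \<Rightarrow> mat" where
  "basisMat m k = (case fst k of 0 \<Rightarrow> Mmat m (snd k) | Suc 0 \<Rightarrow> Rmat m (snd k)
                  | Suc (Suc 0) \<Rightarrow> Lmat m (snd k) | _ \<Rightarrow> Fmat m (snd k))"

definition mscale :: "complex \<Rightarrow> mat \<Rightarrow> mat" where
  "mscale c B = (\<lambda>y z. c * B y z)"

end

theory Submission
  imports Defs
begin

text \<open>A matrix commutes with G exactly when it is constant on the orbits of G on X \<times> X, so
  the orbit indicators form a basis of the centralizer algebra and its dimension is the number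
  of orbits. An orbit is determined by |y|, |z| and rho(y, z), since these fix the sizes of the
  eight Venn regions of x0, y, z in S. For |y| = |z| = m the possible values of rho fill a
  lattice polytope that is in bijection with the compositions of m into five parts, so there
  are C(m+4, 4) of them; complementing z and swapping y and z carry this count over to the
  other three types.\<close>
interpretation VS: vector_space mscale
  by unfold_locales (auto simp: mscale_def fun_eq_iff algebra_simps)

lemma mscale_apply [simp]: "mscale c B y z = c * B y z"
  by (simp add: mscale_def)

lemma sum_mat_apply: "(sum f A :: mat) y z = (\<Sum>a\<in>A. f a y z)"
  by (induction A rule: infinite_finite_induct) auto

definition fibre_mat :: "(nat set \<Rightarrow> nat set \<Rightarrow> 'k) \<Rightarrow> nat set set \<Rightarrow> 'k \<Rightarrow> mat" where
  "fibre_mat \<kappa> X k = (\<lambda>y z. if y \<in> X \<and> z \<in> X \<and> \<kappa> y z = k then 1 else 0)"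

definition fibre_constant_mats :: "(nat set \<Rightarrow> nat set \<Rightarrow> 'k) \<Rightarrow> nat set set \<Rightarrow> mat set" where
  "fibre_constant_mats \<kappa> X = {B. \<exists>c. B = (\<lambda>y z. if y \<in> X \<and> z \<in> X then c (\<kappa> y z) else 0)}"

lemma fibre_mat_apply [simp]:
  "y \<in> X \<Longrightarrow> z \<in> X \<Longrightarrow> fibre_mat \<kappa> X k y z = (if \<kappa> y z = k then 1 else 0)"
  by (simp add: fibre_mat_def)

lemma inj_on_fibre_mat: "inj_on (fibre_mat \<kappa> X) (case_prod \<kappa> ` (X \<times> X))"
proof (rule inj_onI)
  fix k k' assume "k \<in> case_prod \<kappa> ` (X \<times> X)" and eq: "fibre_mat \<kappa> X k = fibre_mat \<kappa> X k'"
  then obtain y z where "y \<in> X" "z \<in> X" "k = \<kappa> y z" by auto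
  then show "k = k'"
    using fun_cong[OF fun_cong[OF eq, of y], of z] by (auto split: if_splits)
qed

lemma fibre_mat_independent: "VS.independent (fibre_mat \<kappa> X ` case_prod \<kappa> ` (X \<times> X))"
  unfolding VS.independent_explicit_module
proof (intro allI impI)
  fix t u v
  assume t: "finite t" "t \<subseteq> fibre_mat \<kappa> X ` case_prod \<kappa> ` (X \<times> X)"
    and sum0: "(\<Sum>w\<in>t. mscale (u w) w) = 0" and v: "v \<in> t"
  obtain y z where yz: "y \<in> X" "z \<in> X" and v_eq: "v = fibre_mat \<kappa> X (\<kappa> y z)"
    using t(2) v by auto
  have entry: "w y z = (if w = v then 1 else 0)" if "w \<in> t" for w
  proof -
    obtain y' z' where "y' \<in> X" "z' \<in> X" and w_eq: "w = fibre_mat \<kappa> X (\<kappa> y' z')"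
      using t(2) \<open>w \<in> t\<close> by auto
    then have "\<kappa> y' z' \<in> case_prod \<kappa> ` (X \<times> X)" "\<kappa> y z \<in> case_prod \<kappa> ` (X \<times> X)"
      using yz by (auto intro: rev_image_eqI)
    then have "w = v \<longleftrightarrow> \<kappa> y z = \<kappa> y' z'"
      unfolding w_eq v_eq using inj_on_eq_iff[OF inj_on_fibre_mat] by metis
    then show ?thesis using yz w_eq by simp
  qed
  have "0 = (\<Sum>w\<in>t. mscale (u w) w) y z" using sum0 by simp
  also have "\<dots> = (\<Sum>w\<in>t. u w * (if w = v then 1 else 0))"
    unfolding sum_mat_apply mscale_apply using entry by (intro sum.cong) auto
  also have "\<dots> = u v" using t(1) v by (simp add: if_distrib cong: if_cong)
  finally show "u v = 0" by simp
qed

lemma fibre_constant_matsI: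
  assumes "\<And>y z. y \<notin> X \<or> z \<notin> X \<Longrightarrow> B y z = 0"
    and "\<And>y z y' z'. y \<in> X \<Longrightarrow> z \<in> X \<Longrightarrow> y' \<in> X \<Longrightarrow> z' \<in> X \<Longrightarrow>
           \<kappa> y z = \<kappa> y' z' \<Longrightarrow> B y z = B y' z'"
  shows "B \<in> fibre_constant_mats \<kappa> X"
proof -
  let ?rep = "inv_into (X \<times> X) (case_prod \<kappa>)"
  have "B y z = (if y \<in> X \<and> z \<in> X then case_prod B (?rep (\<kappa> y z)) else 0)" for y z
  proof (cases "y \<in> X \<and> z \<in> X")
    case True
    then have key: "\<kappa> y z \<in> case_prod \<kappa> ` (X \<times> X)" by (auto intro: rev_image_eqI)
    obtain y0 z0 where rep: "?rep (\<kappa> y z) = (y0, z0)" by fastforce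
    then have "y0 \<in> X" "z0 \<in> X" "\<kappa> y0 z0 = \<kappa> y z"
      using inv_into_into[OF key] f_inv_into_f[OF key] by simp_all
    then show ?thesis using assms(2)[of y0 z0 y z] True rep by simp
  qed (use assms(1) in auto)
  then show ?thesis
    unfolding fibre_constant_mats_def by (intro CollectI exI[of _ "\<lambda>k. case_prod B (?rep k)"] ext)
qed

lemma fibre_constant_mats_subspace: "VS.subspace (fibre_constant_mats \<kappa> X)"
  unfolding VS.subspace_def
proof (intro conjI ballI allI)
  show "0 \<in> fibre_constant_mats \<kappa> X"
    unfolding fibre_constant_mats_def by (intro CollectI exI[of _ "\<lambda>_. 0"]) (simp add: fun_eq_iff)
next
  fix B C assume "B \<in> fibre_constant_mats \<kappa> X" "C \<in> fibre_constant_mats \<kappa> X"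
  then obtain b c where "B = (\<lambda>y z. if y \<in> X \<and> z \<in> X then b (\<kappa> y z) else 0)"
    and "C = (\<lambda>y z. if y \<in> X \<and> z \<in> X then c (\<kappa> y z) else 0)"
    unfolding fibre_constant_mats_def by blast
  then show "B + C \<in> fibre_constant_mats \<kappa> X"
    unfolding fibre_constant_mats_def by (intro CollectI exI[of _ "\<lambda>k. b k + c k"]) (simp add: fun_eq_iff)
next
  fix a B assume "B \<in> fibre_constant_mats \<kappa> X"
  then obtain b where "B = (\<lambda>y z. if y \<in> X \<and> z \<in> X then b (\<kappa> y z) else 0)"
    unfolding fibre_constant_mats_def by blast
  then show "mscale a B \<in> fibre_constant_mats \<kappa> X"
    unfolding fibre_constant_mats_def by (intro CollectI exI[of _ "\<lambda>k. a * b k"]) (simp add: fun_eq_iff)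
qed

lemma fibre_mat_in_fibre_constant_mats: "fibre_mat \<kappa> X k \<in> fibre_constant_mats \<kappa> X"
  unfolding fibre_constant_mats_def fibre_mat_def
  by (intro CollectI exI[of _ "\<lambda>k'. if k' = k then 1 else 0"]) (simp add: fun_eq_iff)

lemma fibre_constant_mat_expansion:
  assumes "finite X"
  shows "(\<lambda>y z. if y \<in> X \<and> z \<in> X then c (\<kappa> y z) else 0)
       = (\<Sum>k\<in>case_prod \<kappa> ` (X \<times> X). mscale (c k) (fibre_mat \<kappa> X k))"
proof (intro ext)
  fix y z
  show "(if y \<in> X \<and> z \<in> X then c (\<kappa> y z) else 0)
      = (\<Sum>k\<in>case_prod \<kappa> ` (X \<times> X). mscale (c k) (fibre_mat \<kappa> X k)) y z"
  proof (cases "y \<in> X \<and> z \<in> X")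
    case True
    then have "\<kappa> y z \<in> case_prod \<kappa> ` (X \<times> X)" by (auto intro: rev_image_eqI)
    with True assms show ?thesis by (simp add: sum_mat_apply if_distrib cong: if_cong)
  next
    case False
    then have "fibre_mat \<kappa> X k y z = 0" for k by (auto simp: fibre_mat_def)
    with False show ?thesis by (auto simp: sum_mat_apply)
  qed
qed

lemma span_fibre_mat:
  assumes "finite X"
  shows "VS.span (fibre_mat \<kappa> X ` case_prod \<kappa> ` (X \<times> X)) = fibre_constant_mats \<kappa> X"
proof
  show "VS.span (fibre_mat \<kappa> X ` case_prod \<kappa> ` (X \<times> X)) \<subseteq> fibre_constant_mats \<kappa> X"
    by (intro VS.span_minimal fibre_constant_mats_subspace) (auto intro: fibre_mat_in_fibre_constant_mats)
  show "fibre_constant_mats \<kappa> X \<subseteq> VS.span (fibre_mat \<kappa> X ` case_prod \<kappa> ` (X \<times> X))"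
  proof
    fix B assume "B \<in> fibre_constant_mats \<kappa> X"
    then obtain c where "B = (\<lambda>y z. if y \<in> X \<and> z \<in> X then c (\<kappa> y z) else 0)"
      unfolding fibre_constant_mats_def by blast
    then have B: "B = (\<Sum>k\<in>case_prod \<kappa> ` (X \<times> X). mscale (c k) (fibre_mat \<kappa> X k))"
      by (simp add: fibre_constant_mat_expansion[OF assms])
    show "B \<in> VS.span (fibre_mat \<kappa> X ` case_prod \<kappa> ` (X \<times> X))"
      unfolding B by (intro VS.span_sum VS.span_scale VS.span_base imageI)
  qed
qed

lemma dim_fibre_constant_mats:
  assumes "finite X"
  shows "VS.dim (fibre_constant_mats \<kappa> X) = card (case_prod \<kappa> ` (X \<times> X))"
proof -
  have "VS.span (fibre_mat \<kappa> X ` case_prod \<kappa> ` (X \<times> X)) = VS.span (fibre_constant_mats \<kappa> X)"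
    by (metis VS.span_span span_fibre_mat[OF assms])
  then have "VS.dim (fibre_constant_mats \<kappa> X) = card (fibre_mat \<kappa> X ` case_prod \<kappa> ` (X \<times> X))"
    using fibre_mat_independent by (intro VS.dim_eq_card)
  then show ?thesis using card_image[OF inj_on_fibre_mat] by simp
qed

lemma finite_Sset [simp]: "finite (Sset m)"
  by (simp add: Sset_def)

lemma card_Sset [simp]: "card (Sset m) = 2 * m + 1"
  by (simp add: Sset_def)

lemma x0_subset_Sset: "x0 m \<subseteq> Sset m"
  by (auto simp: Sset_def x0_def)

lemma card_x0 [simp]: "card (x0 m) = m"
  by (simp add: x0_def)

lemma ksub_iff: "y \<in> ksub A k \<longleftrightarrow> y \<subseteq> A \<and> card y = k"
  by (simp add: ksub_def)

lemma Xset_iff: "y \<in> Xset m \<longleftrightarrow> y \<subseteq> Sset m \<and> (card y = m \<or> card y = m + 1)"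
  by (auto simp: Xset_def ksub_def)

lemma finite_Xset: "finite (Xset m)"
  by (rule finite_subset[of _ "Pow (Sset m)"]) (auto simp: Xset_iff)

definition venn_region :: "'a set \<Rightarrow> 'a set \<Rightarrow> 'a set \<Rightarrow> 'a set \<Rightarrow> bool \<times> bool \<times> bool \<Rightarrow> 'a set" where
  "venn_region S X y z l = {x \<in> S. (x \<in> X, x \<in> y, x \<in> z) = l}"

lemma card_venn_regions:
  assumes S: "finite S" and sub: "X \<subseteq> S" "y \<subseteq> S" "z \<subseteq> S"
  defines "c \<equiv> \<lambda>l. card (venn_region S X y z l)"
  shows "card (X \<inter> y \<inter> z) = c (True, True, True)
     \<and> card (X \<inter> y) = c (True, True, True) + c (True, True, False)
     \<and> card (X \<inter> z) = c (True, True, True) + c (True, False, True)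
     \<and> card (y \<inter> z) = c (True, True, True) + c (False, True, True)
     \<and> card y = c (True, True, True) + c (True, True, False) + c (False, True, True) + c (False, True, False)
     \<and> card z = c (True, True, True) + c (True, False, True) + c (False, True, True) + c (False, False, True)
     \<and> card X = c (True, True, True) + c (True, True, False) + c (True, False, True) + c (True, False, False)
     \<and> card (S - X) = c (False, True, True) + c (False, True, False) + c (False, False, True) + c (False, False, False)"
proof -
  have split: "card A = card B + card C" if "A \<subseteq> S" "B = A \<inter> D" "C = A - D" for A B C D
    using card_Int_Diff[of A D] finite_subset[OF \<open>A \<subseteq> S\<close> S] that by simp
  have counts: "card (X \<inter> y) = card (X \<inter> y \<inter> z) + card (X \<inter> y - z)"
    "card (X \<inter> z) = card (X \<inter> y \<inter> z) + card (X \<inter> z - y)"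
    "card (y \<inter> z) = card (X \<inter> y \<inter> z) + card (y \<inter> z - X)"
    "card y = card (X \<inter> y) + card (y - X)"
    "card (y - X) = card (y \<inter> z - X) + card (y - X - z)"
    "card z = card (X \<inter> z) + card (z - X)"
    "card (z - X) = card (y \<inter> z - X) + card (z - X - y)"
    "card X = card (X \<inter> y) + card (X - y)"
    "card (X - y) = card (X \<inter> z - y) + card (X - y - z)"
    "card (S - X) = card (y - X) + card (S - X - y)"
    "card (S - X - y) = card (z - X - y) + card (S - X - y - z)"
    using sub by (intro split; blast)+
  have regions: "venn_region S X y z (True, True, True) = X \<inter> y \<inter> z"
    "venn_region S X y z (True, True, False) = X \<inter> y - z"
    "venn_region S X y z (True, False, True) = X \<inter> z - y"
    "venn_region S X y z (True, False, False) = X - y - z"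
    "venn_region S X y z (False, True, True) = y \<inter> z - X"
    "venn_region S X y z (False, True, False) = y - X - z"
    "venn_region S X y z (False, False, True) = z - X - y"
    "venn_region S X y z (False, False, False) = S - X - y - z"
    using sub unfolding venn_region_def by auto
  show ?thesis unfolding c_def regions using counts by linarith
qed

lemma bij_betw_transport_labels:
  assumes S: "finite S" and same_card: "\<And>l. card {x \<in> S. f x = l} = card {x \<in> S. g x = l}"
  obtains \<sigma> where "bij_betw \<sigma> S S" "\<And>x. x \<in> S \<Longrightarrow> g (\<sigma> x) = f x" "\<And>x. x \<notin> S \<Longrightarrow> \<sigma> x = x"
proof -
  have "\<forall>l. \<exists>h. bij_betw h {x \<in> S. f x = l} {x \<in> S. g x = l}"
    using finite_same_card_bij[of "{x \<in> S. f x = _}" "{x \<in> S. g x = _}"] S same_card by auto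
  then obtain H where H: "\<And>l. bij_betw (H l) {x \<in> S. f x = l} {x \<in> S. g x = l}" by metis
  define \<sigma> where "\<sigma> x = (if x \<in> S then H (f x) x else x)" for x
  have maps: "\<sigma> x \<in> S \<and> g (\<sigma> x) = f x" if "x \<in> S" for x
    using H[of "f x"] that unfolding \<sigma>_def bij_betw_def by auto
  have "inj_on \<sigma> S"
  proof (rule inj_onI)
    fix x x' assume "x \<in> S" "x' \<in> S" and eq: "\<sigma> x = \<sigma> x'"
    then have "f x = f x'" using maps by metis
    then show "x = x'"
      using H[of "f x"] \<open>x \<in> S\<close> \<open>x' \<in> S\<close> eq unfolding \<sigma>_def bij_betw_def inj_on_def by auto
  qed
  moreover have "S \<subseteq> \<sigma> ` S"
  proof
    fix w assume "w \<in> S"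
    then obtain x where "x \<in> S" "f x = g w" "w = H (g w) x"
      using H[of "g w"] unfolding bij_betw_def by blast
    then have "w = \<sigma> x" by (simp add: \<sigma>_def)
    then show "w \<in> \<sigma> ` S" using \<open>x \<in> S\<close> by blast
  qed
  moreover have "\<sigma> ` S \<subseteq> S" using maps by auto
  ultimately have "bij_betw \<sigma> S S" unfolding bij_betw_def by blast
  moreover have "\<sigma> x = x" if "x \<notin> S" for x using that by (simp add: \<sigma>_def)
  ultimately show thesis using that maps by blast
qed

lemma Ggrp_inj_on: "\<sigma> \<in> Ggrp m \<Longrightarrow> inj_on \<sigma> (Sset m)"
  by (simp add: Ggrp_def bij_betw_def)

lemma Ggrp_image_subset: "\<sigma> \<in> Ggrp m \<Longrightarrow> A \<subseteq> Sset m \<Longrightarrow> \<sigma> ` A \<subseteq> Sset m"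
  by (auto simp: Ggrp_def bij_betw_def)

lemma card_Ggrp_image: "\<sigma> \<in> Ggrp m \<Longrightarrow> A \<subseteq> Sset m \<Longrightarrow> card (\<sigma> ` A) = card A"
  by (meson Ggrp_inj_on card_image inj_on_subset)

lemma rho_Ggrp_image:
  assumes \<sigma>: "\<sigma> \<in> Ggrp m" and y: "y \<subseteq> Sset m" and z: "z \<subseteq> Sset m"
  shows "rho m (\<sigma> ` y) (\<sigma> ` z) = rho m y z"
proof -
  have image_Int: "\<sigma> ` A \<inter> \<sigma> ` B = \<sigma> ` (A \<inter> B)" if "A \<subseteq> Sset m" "B \<subseteq> Sset m" for A B
    using inj_on_image_Int[OF Ggrp_inj_on[OF \<sigma>] that] by simp
  have x0: "\<sigma> ` x0 m = x0 m" using \<sigma> by (simp add: Ggrp_def)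
  have "card (\<sigma> ` A \<inter> \<sigma> ` B) = card (A \<inter> B)" if "A \<subseteq> Sset m" "B \<subseteq> Sset m" for A B
    using image_Int[OF that] card_Ggrp_image[OF \<sigma>, of "A \<inter> B"] that by auto
  moreover have "\<sigma> ` (x0 m \<inter> y) \<inter> \<sigma> ` z = \<sigma> ` (x0 m \<inter> y \<inter> z)"
    using image_Int x0_subset_Sset y z by (metis inf.coboundedI2)
  ultimately show ?thesis
    using x0_subset_Sset y z image_Int[OF x0_subset_Sset y] x0
    unfolding rho_def by (metis inf.coboundedI2)
qed

text \<open>Equal sizes and equal rho fix the sizes of all eight Venn regions of x0, y, z in S;
  a permutation of S matching these regions preserves x0.\<close>
lemma Ggrp_orbit_of_rho_eq:
  assumes y: "y \<subseteq> Sset m" "y' \<subseteq> Sset m" and z: "z \<subseteq> Sset m" "z' \<subseteq> Sset m"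
    and card_eq: "card y = card y'" "card z = card z'" and rho_eq: "rho m y z = rho m y' z'"
  obtains \<sigma> where "\<sigma> \<in> Ggrp m" "\<sigma> ` y = y'" "\<sigma> ` z = z'"
proof -
  let ?S = "Sset m" and ?X = "x0 m"
  note v = card_venn_regions[OF finite_Sset x0_subset_Sset y(1) z(1)]
  note v' = card_venn_regions[OF finite_Sset x0_subset_Sset y(2) z(2)]
  have rho_cards: "card (?X \<inter> y) = card (?X \<inter> y')" "card (?X \<inter> z) = card (?X \<inter> z')"
    "card (y \<inter> z) = card (y' \<inter> z')" "card (?X \<inter> y \<inter> z) = card (?X \<inter> y' \<inter> z')"
    using rho_eq by (auto simp: rho_def)
  have "card (venn_region ?S ?X y z (b1, b2, b3)) = card (venn_region ?S ?X y' z' (b1, b2, b3))"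
    for b1 b2 b3
    using v v' rho_cards card_eq by (elim conjE) (cases b1; cases b2; cases b3; simp)
  then have region_cards: "card (venn_region ?S ?X y z l) = card (venn_region ?S ?X y' z' l)" for l
    by (cases l) simp
  then obtain \<sigma> where bij: "bij_betw \<sigma> ?S ?S"
    and labels: "\<And>x. x \<in> ?S \<Longrightarrow> (\<sigma> x \<in> ?X, \<sigma> x \<in> y', \<sigma> x \<in> z') = (x \<in> ?X, x \<in> y, x \<in> z)"
    and fixed: "\<And>x. x \<notin> ?S \<Longrightarrow> \<sigma> x = x"
    using bij_betw_transport_labels[OF finite_Sset region_cards[unfolded venn_region_def]] by blast
  have image_eq: "\<sigma> ` A = B" if "A \<subseteq> ?S" "B \<subseteq> ?S" "\<And>x. x \<in> ?S \<Longrightarrow> \<sigma> x \<in> B \<longleftrightarrow> x \<in> A" for A B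
  proof
    show "\<sigma> ` A \<subseteq> B" using that by auto
    show "B \<subseteq> \<sigma> ` A"
    proof
      fix w assume "w \<in> B"
      then obtain x where "x \<in> ?S" "w = \<sigma> x"
        using bij \<open>B \<subseteq> ?S\<close> unfolding bij_betw_def by auto
      then show "w \<in> \<sigma> ` A" using that \<open>w \<in> B\<close> by auto
    qed
  qed
  have "\<sigma> \<in> Ggrp m"
    unfolding Ggrp_def using bij fixed image_eq[OF x0_subset_Sset x0_subset_Sset] labels by auto
  moreover have "\<sigma> ` y = y'" "\<sigma> ` z = z'"
    using image_eq[OF y] image_eq[OF z] labels by auto
  ultimately show thesis by (rule that)
qed

text \<open>The first component of the key is the type I-IV of the matrix: 0, 1, 2, 3 for
  (|y|, |z|) = (m, m), (m, m+1), (m+1, m), (m+1, m+1).\<close>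
definition orbit_key :: "nat \<Rightarrow> nat set \<Rightarrow> nat set \<Rightarrow> nat \<times> nat \<times> nat \<times> nat \<times> nat" where
  "orbit_key m y z = (2 * (card y - m) + (card z - m), rho m y z)"

lemma orbit_key_eq_iff:
  assumes "y \<in> Xset m" "z \<in> Xset m" "y' \<in> Xset m" "z' \<in> Xset m"
  shows "orbit_key m y z = orbit_key m y' z'
     \<longleftrightarrow> card y = card y' \<and> card z = card z' \<and> rho m y z = rho m y' z'"
  using assms unfolding Xset_iff orbit_key_def by (elim conjE disjE) simp_all

lemma centralizer_eq_fibre_constant_mats:
  "centralizer m = fibre_constant_mats (orbit_key m) (Xset m)"
proof
  show "centralizer m \<subseteq> fibre_constant_mats (orbit_key m) (Xset m)"
  proof
    fix B assume B: "B \<in> centralizer m"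
    show "B \<in> fibre_constant_mats (orbit_key m) (Xset m)"
    proof (rule fibre_constant_matsI)
      show "B y z = 0" if "y \<notin> Xset m \<or> z \<notin> Xset m" for y z
        using B that unfolding centralizer_def Xmats_def by blast
      fix y z y' z'
      assume yz: "y \<in> Xset m" "z \<in> Xset m" "y' \<in> Xset m" "z' \<in> Xset m"
        and key: "orbit_key m y z = orbit_key m y' z'"
      obtain \<sigma> where "\<sigma> \<in> Ggrp m" "\<sigma> ` y = y'" "\<sigma> ` z = z'"
        using Ggrp_orbit_of_rho_eq[of y m y' z z'] yz key[unfolded orbit_key_eq_iff[OF yz]]
        by (auto simp: Xset_iff)
      then show "B y z = B y' z'" using B yz unfolding centralizer_def by auto
    qed
  qed
  show "fibre_constant_mats (orbit_key m) (Xset m) \<subseteq> centralizer m"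
  proof
    fix B assume "B \<in> fibre_constant_mats (orbit_key m) (Xset m)"
    then obtain c where B: "B = (\<lambda>y z. if y \<in> Xset m \<and> z \<in> Xset m then c (orbit_key m y z) else 0)"
      unfolding fibre_constant_mats_def by blast
    have "B (\<sigma> ` y) (\<sigma> ` z) = B y z" if \<sigma>: "\<sigma> \<in> Ggrp m" and yz: "y \<in> Xset m" "z \<in> Xset m" for \<sigma> y z
    proof -
      have "y \<subseteq> Sset m" "z \<subseteq> Sset m" using yz by (auto simp: Xset_iff)
      then have "\<sigma> ` y \<in> Xset m" "\<sigma> ` z \<in> Xset m"
        and "orbit_key m (\<sigma> ` y) (\<sigma> ` z) = orbit_key m y z"
        using yz Ggrp_image_subset[OF \<sigma>] card_Ggrp_image[OF \<sigma>] rho_Ggrp_image[OF \<sigma>]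
        by (auto simp: Xset_iff orbit_key_def)
      then show ?thesis using yz by (simp add: B)
    qed
    then show "B \<in> centralizer m" unfolding centralizer_def Xmats_def by (simp add: B)
  qed
qed

lemma orbmat_eq_fibre_mat:
  assumes "a \<in> {m, m + 1}" "b \<in> {m, m + 1}"
  shows "orbmat m a b q = fibre_mat (orbit_key m) (Xset m) (2 * (a - m) + (b - m), q)"
  using assms by (auto simp: fun_eq_iff orbmat_def fibre_mat_def orbit_key_def ksub_iff Xset_iff)

lemma basisIdx_iff:
  "(c, q) \<in> basisIdx m \<longleftrightarrow> c < 4 \<and> q \<in> Iset m (m + c div 2) (m + c mod 2)"
proof -
  have "c < 4 \<longleftrightarrow> c = 0 \<or> c = 1 \<or> c = 2 \<or> c = 3" by auto
  then show ?thesis by (auto simp: basisIdx_def)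
qed

lemma basisMat_eq_fibre_mat:
  assumes "k \<in> basisIdx m"
  shows "basisMat m k = fibre_mat (orbit_key m) (Xset m) k"
proof -
  obtain c q where k: "k = (c, q)" and "c < 4" using assms basisIdx_iff by (cases k) blast
  then have "c = 0 \<or> c = 1 \<or> c = 2 \<or> c = 3" by auto
  then show ?thesis
    unfolding k basisMat_def Mmat_def Rmat_def Lmat_def Fmat_def
    by (auto simp: orbmat_eq_fibre_mat numeral_eq_Suc)
qed

lemma basisIdx_eq_orbit_keys: "basisIdx m = case_prod (orbit_key m) ` (Xset m \<times> Xset m)"
proof (intro equalityI subsetI)
  fix k assume "k \<in> basisIdx m"
  then obtain c q where k: "k = (c, q)" and "c < 4" and "q \<in> Iset m (m + c div 2) (m + c mod 2)"
    by (metis basisIdx_iff surj_pair)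
  then obtain y z where "y \<subseteq> Sset m" "card y = m + c div 2" "z \<subseteq> Sset m" "card z = m + c mod 2"
    and "q = rho m y z" unfolding Iset_def ksub_iff by blast
  moreover have "c div 2 \<le> 1" "c mod 2 \<le> 1" "2 * (c div 2) + c mod 2 = c" using \<open>c < 4\<close> by auto
  ultimately show "k \<in> case_prod (orbit_key m) ` (Xset m \<times> Xset m)"
    unfolding k by (intro image_eqI[of _ _ "(y, z)"]) (auto simp: orbit_key_def Xset_iff)
next
  fix k assume "k \<in> case_prod (orbit_key m) ` (Xset m \<times> Xset m)"
  then obtain y z where yz: "y \<in> Xset m" "z \<in> Xset m" and k: "k = orbit_key m y z" by auto
  have "rho m y z \<in> Iset m (card y) (card z)"
    using yz unfolding Iset_def ksub_iff Xset_iff by blast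
  then show "k \<in> basisIdx m"
    using yz unfolding k orbit_key_def basisIdx_iff Xset_iff by auto
qed

lemma Iset_eq_image: "Iset m a b = case_prod (rho m) ` (ksub (Sset m) a \<times> ksub (Sset m) b)"
  unfolding Iset_def by auto

lemma finite_Iset: "finite (Iset m a b)"
proof -
  have "finite (ksub (Sset m) k)" for k
    by (rule finite_subset[of _ "Pow (Sset m)"]) (auto simp: ksub_iff)
  then show ?thesis unfolding Iset_eq_image by simp
qed

lemma card_Iset_swap: "card (Iset m b a) = card (Iset m a b)"
proof -
  have "card (Iset m b a) \<le> card (Iset m a b)" for a b
  proof (rule surj_card_le[OF finite_Iset])
    show "Iset m b a \<subseteq> (\<lambda>(i, j, t, p). (j, i, t, p)) ` Iset m a b"
    proof
      fix q assume "q \<in> Iset m b a"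
      then obtain y z where "y \<in> ksub (Sset m) b" "z \<in> ksub (Sset m) a" "q = rho m y z"
        unfolding Iset_def by blast
      moreover have "rho m y z = (\<lambda>(i, j, t, p). (j, i, t, p)) (rho m z y)"
        by (simp add: rho_def Int_ac)
      ultimately show "q \<in> (\<lambda>(i, j, t, p). (j, i, t, p)) ` Iset m a b"
        unfolding Iset_def by blast
    qed
  qed
  then show ?thesis by (meson le_antisym)
qed

lemma rho_Diff_right:
  assumes "y \<subseteq> Sset m" "w \<subseteq> Sset m"
  shows "rho m y (Sset m - w) = (card (x0 m \<inter> y), m - card (x0 m \<inter> w),
           card y - card (y \<inter> w), card (x0 m \<inter> y) - card (x0 m \<inter> y \<inter> w))"
proof -
  have fy: "finite y" by (rule finite_subset[OF assms(1) finite_Sset])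
  have "x0 m \<inter> (Sset m - w) = x0 m - w" "y \<inter> (Sset m - w) = y - w"
    "x0 m \<inter> y \<inter> (Sset m - w) = x0 m \<inter> y - w"
    using assms x0_subset_Sset by blast+
  moreover have "card (x0 m - w) = m - card (x0 m \<inter> w)"
    using card_Diff_subset_Int[of "x0 m" w] by (simp add: x0_def)
  moreover have "card (y - w) = card y - card (y \<inter> w)"
    using card_Diff_subset_Int[of y w] fy by simp
  moreover have "card (x0 m \<inter> y - w) = card (x0 m \<inter> y) - card (x0 m \<inter> y \<inter> w)"
    using card_Diff_subset_Int[of "x0 m \<inter> y" w] fy by simp
  ultimately show ?thesis unfolding rho_def by simp
qed

lemma card_Iset_compl_right:
  assumes "b \<le> 2 * m + 1"
  shows "card (Iset m a (2 * m + 1 - b)) = card (Iset m a b)"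
proof -
  let ?tz = "\<lambda>(i, j, t, p). (i, m - j, a - t, i - p)"
  have le: "card (Iset m a (2 * m + 1 - b)) \<le> card (Iset m a b)" if "b \<le> 2 * m + 1" for b
  proof (rule surj_card_le[OF finite_Iset])
    show "Iset m a (2 * m + 1 - b) \<subseteq> ?tz ` Iset m a b"
    proof
      fix q assume "q \<in> Iset m a (2 * m + 1 - b)"
      then obtain y z where y: "y \<subseteq> Sset m" "card y = a" and z: "z \<subseteq> Sset m" "card z = 2 * m + 1 - b"
        and q: "q = rho m y z" unfolding Iset_def ksub_iff by blast
      have "Sset m - (Sset m - z) = z" using z(1) by blast
      moreover have "card (Sset m - z) = b"
        using card_Diff_subset[OF finite_subset[OF z(1) finite_Sset] z(1)] z(2) that by simp
      ultimately
      have "q = ?tz (rho m y (Sset m - z))" "rho m y (Sset m - z) \<in> Iset m a b"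
        using rho_Diff_right[OF y(1), of "Sset m - z"] y unfolding q Iset_def ksub_iff
        by (auto simp: rho_def)
      then show "q \<in> ?tz ` Iset m a b" by blast
    qed
  qed
  show ?thesis using le[OF assms] le[of "2 * m + 1 - b"] assms by simp
qed

definition rho_polytope :: "nat \<Rightarrow> (nat \<times> nat \<times> nat \<times> nat) set" where
  "rho_polytope m = {(i, j, t, p). p \<le> i \<and> p \<le> j \<and> i + j \<le> m + p \<and> p \<le> t
     \<and> t + i \<le> m + p \<and> t + j \<le> m + p \<and> m + p \<le> i + j + t + 1}"

lemma Iset_subset_rho_polytope: "Iset m m m \<subseteq> rho_polytope m"
proof
  fix q assume "q \<in> Iset m m m"
  then obtain y z where y: "y \<subseteq> Sset m" "card y = m" and z: "z \<subseteq> Sset m" "card z = m"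
    and q: "q = rho m y z" unfolding Iset_def ksub_iff by blast
  have "card (Sset m - x0 m) = m + 1"
    using card_Diff_subset[OF _ x0_subset_Sset] by (simp add: x0_def)
  then show "q \<in> rho_polytope m"
    using card_venn_regions[OF finite_Sset x0_subset_Sset y(1) z(1)] y z
    unfolding q rho_def rho_polytope_def by (simp only: card_x0 mem_Collect_eq prod.case) linarith
qed

lemma card_Un_interval: "finite A \<Longrightarrow> \<forall>x\<in>A. x < c \<Longrightarrow> card (A \<union> {c..d::nat}) = card A + card {c..d}"
  by (rule card_Un_disjoint) auto

text \<open>Witnesses: y takes i points of x0 and the rest outside; z is split into its four Venn
  regions, each laid out as a block of consecutive numbers.\<close>
lemma rho_polytope_subset_Iset: "rho_polytope m \<subseteq> Iset m m m"
proof
  fix q assume "q \<in> rho_polytope m"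
  moreover obtain i j t p where q: "q = (i, j, t, p)" by (cases q rule: prod_cases4)
  ultimately have c: "p \<le> i" "p \<le> j" "i + j \<le> m + p" "p \<le> t"
    "t + i \<le> m + p" "t + j \<le> m + p" "m + p \<le> i + j + t + 1"
    unfolding rho_polytope_def by simp_all
  define s where "s = t - p"
  define y where "y = {1..i} \<union> {m+1..2*m-i}"
  define z where "z = {1..p} \<union> {i+1..i+j-p} \<union> {m+1..m+s} \<union> {2*m-i+1..3*m-i-j-s}"
  have x0: "x0 m = {1..m}" by (simp add: x0_def)
  have "y \<subseteq> Sset m" "z \<subseteq> Sset m" unfolding y_def z_def Sset_def s_def using c by auto
  moreover have "card y = m" unfolding y_def using c by (subst card_Un_interval) auto
  moreover have "card z = m" unfolding z_def using c s_def
    by (subst card_Un_interval; (subst card_Un_interval)?; (subst card_Un_interval)?) auto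
  moreover have "x0 m \<inter> y = {1..i}" unfolding x0 y_def using c by auto
  moreover have "x0 m \<inter> z = {1..p} \<union> {i+1..i+j-p}" unfolding x0 z_def using c s_def by auto
  moreover have "y \<inter> z = {1..p} \<union> {m+1..m+s}" unfolding y_def z_def using c s_def by auto
  moreover have "{1..i} \<inter> z = {1..p}" unfolding z_def using c s_def by auto
  ultimately show "q \<in> Iset m m m"
    unfolding q Iset_def ksub_iff rho_def using c s_def
    by (intro CollectI exI[of _ y] exI[of _ z]) (simp add: card_Un_interval)
qed

text \<open>A bijection between rho_polytope m and the compositions of m into five parts. With
  c = m + p - i - j and s = t - p, the last part is 0 if s = c, the odd number 2 (c - s) - 1
  if s < c, and the even number 2 (s - c) if s > c.\<close>
fun composition_rho :: "nat list \<Rightarrow> nat \<times> nat \<times> nat \<times> nat" where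
  "composition_rho [a, b, c, d, e] =
     (if e = 0 then (a + d, b + d, d + c, d)
      else if odd e then (let d' = d + e div 2 in (a + d', b + d', d' + c, d'))
      else (let n = e div 2 in (a + n + d, b + n + d, d + c + n, d)))"
| "composition_rho _ = (0, 0, 0, 0)"

definition rho_composition :: "nat \<Rightarrow> nat \<times> nat \<times> nat \<times> nat \<Rightarrow> nat list" where
  "rho_composition m = (\<lambda>(i, j, t, p). let a = i - p; b = j - p; c = m + p - i - j; s = t - p in
     if s = c then [a, b, c, p, 0]
     else if s < c then [a, b, s, p + 1 - (c - s), 2 * (c - s) - 1]
     else [a - (s - c), b - (s - c), c, p, 2 * (s - c)])"

lemma composition_rho_inverse:
  assumes "length l = 5" "sum_list l = m"
  shows "rho_composition m (composition_rho l) = l \<and> composition_rho l \<in> rho_polytope m"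
proof -
  obtain a b c d e where l: "l = [a, b, c, d, e]"
    using assms(1) by (auto simp: numeral_eq_Suc length_Suc_conv)
  have m: "m = a + b + c + d + e" using assms(2) unfolding l by simp
  have "e = 0 \<or> (\<exists>k. e = 2 * k + 1) \<or> (\<exists>n. e = 2 * n + 2)" by presburger
  then consider "e = 0" | k where "e = 2 * k + 1" | n where "e = 2 * n + 2" by blast
  then show ?thesis
    by cases (simp_all add: l m rho_composition_def rho_polytope_def Let_def)
qed

lemma rho_composition_inverse:
  assumes "q \<in> rho_polytope m"
  shows "composition_rho (rho_composition m q) = q
       \<and> length (rho_composition m q) = 5 \<and> sum_list (rho_composition m q) = m"
proof -
  obtain i j t p where q: "q = (i, j, t, p)" by (cases q rule: prod_cases4)
  have c: "p \<le> i" "p \<le> j" "i + j \<le> m + p" "p \<le> t"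
    "t + i \<le> m + p" "t + j \<le> m + p" "m + p \<le> i + j + t + 1"
    using assms unfolding q rho_polytope_def by simp_all
  consider "t - p = m + p - i - j" | "t - p < m + p - i - j" | "m + p - i - j < t - p" by linarith
  then show ?thesis
  proof cases
    case 1
    then show ?thesis using c by (simp add: q rho_composition_def Let_def)
  next
    case 2
    define k where "k = m + p - i - j - (t - p) - 1"
    have "rho_composition m q = [i - p, j - p, t - p, p - k, 2 * k + 1]"
      using 2 c by (simp add: q rho_composition_def Let_def k_def)
    then show ?thesis using 2 c by (simp add: q Let_def k_def)
  next
    case 3
    define n where "n = t - p - (m + p - i - j) - 1"
    have "rho_composition m q = [i - p - Suc n, j - p - Suc n, m + p - i - j, p, 2 * n + 2]"
      using 3 c by (simp add: q rho_composition_def Let_def n_def)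
    then show ?thesis using 3 c by (simp add: q Let_def n_def)
  qed
qed

lemma card_rho_polytope: "card (rho_polytope m) = (m + 4) choose 4"
proof -
  have "bij_betw composition_rho {l. length l = 5 \<and> sum_list l = m} (rho_polytope m)"
    by (rule bij_betw_byWitness[where f' = "rho_composition m"])
       (use composition_rho_inverse rho_composition_inverse in auto)
  then have "card (rho_polytope m) = card {l :: nat list. length l = 5 \<and> sum_list l = m}"
    by (simp add: bij_betw_same_card)
  also have "\<dots> = (m + 5 - 1) choose m" by (rule card_length_sum_list)
  also have "\<dots> = (m + 4) choose 4"
    using binomial_symmetric[of m "m + 4"] by (simp add: add.commute)
  finally show ?thesis .
qed

lemma card_Iset_orbit_type:
  assumes "a \<in> {m, m + 1}" "b \<in> {m, m + 1}"
  shows "card (Iset m a b) = (m + 4) choose 4"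
proof -
  have c00: "card (Iset m m m) = (m + 4) choose 4"
    using Iset_subset_rho_polytope rho_polytope_subset_Iset card_rho_polytope by (metis subset_antisym)
  have c01: "card (Iset m m (m + 1)) = (m + 4) choose 4"
    using card_Iset_compl_right[of m m m] c00 by (simp add: numeral_2_eq_2)
  have c10: "card (Iset m (m + 1) m) = (m + 4) choose 4"
    using card_Iset_swap[of m "m + 1" m] c01 by simp
  have c11: "card (Iset m (m + 1) (m + 1)) = (m + 4) choose 4"
    using card_Iset_compl_right[of m m "m + 1"] c10 by (simp add: numeral_2_eq_2)
  show ?thesis using assms c00 c01 c10 c11 by auto
qed

lemma card_basisIdx: "card (basisIdx m) = 4 * ((m + 4) choose 4)"
proof -
  let ?A = "{0::nat} \<times> Iset m m m" and ?B = "{1::nat} \<times> Iset m m (m + 1)"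
    and ?C = "{2::nat} \<times> Iset m (m + 1) m" and ?D = "{3::nat} \<times> Iset m (m + 1) (m + 1)"
  have fin: "finite ?A" "finite ?B" "finite ?C" "finite ?D" using finite_Iset by auto
  have "card (?A \<union> ?B \<union> ?C \<union> ?D) = card (?A \<union> ?B \<union> ?C) + card ?D"
    using fin by (intro card_Un_disjoint) auto
  also have "card (?A \<union> ?B \<union> ?C) = card (?A \<union> ?B) + card ?C"
    using fin by (intro card_Un_disjoint) auto
  also have "card (?A \<union> ?B) = card ?A + card ?B"
    using fin by (intro card_Un_disjoint) auto
  finally show ?thesis
    unfolding basisIdx_def by (simp add: card_cartesian_product_singleton card_Iset_orbit_type)
qed

theorem theorem3p4:
  fixes m :: nat
  assumes "m \<ge> 1"
  shows "inj_on (basisMat m) (basisIdx m)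
       \<and> basisMat m ` basisIdx m \<subseteq> centralizer m
       \<and> \<not> module.dependent mscale (basisMat m ` basisIdx m)
       \<and> module.span mscale (basisMat m ` basisIdx m) = centralizer m
       \<and> vector_space.dim mscale (centralizer m) = 4 * ((m + 4) choose 4)"
proof -
  let ?\<kappa> = "orbit_key m" and ?X = "Xset m"
  have basis: "basisMat m ` basisIdx m = fibre_mat ?\<kappa> ?X ` case_prod ?\<kappa> ` (?X \<times> ?X)"
    using basisMat_eq_fibre_mat basisIdx_eq_orbit_keys by (metis image_cong)
  have "inj_on (basisMat m) (basisIdx m)"
    using inj_on_fibre_mat[of ?\<kappa> ?X] basisMat_eq_fibre_mat basisIdx_eq_orbit_keys
    by (metis inj_on_cong)
  moreover have "VS.span (basisMat m ` basisIdx m) = centralizer m"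
    unfolding basis centralizer_eq_fibre_constant_mats using finite_Xset by (rule span_fibre_mat)
  moreover have "VS.dim (centralizer m) = 4 * ((m + 4) choose 4)"
    unfolding centralizer_eq_fibre_constant_mats dim_fibre_constant_mats[OF finite_Xset]
    by (simp add: basisIdx_eq_orbit_keys[symmetric] card_basisIdx)
  ultimately show ?thesis
    using fibre_mat_independent[of ?\<kappa> ?X] VS.span_superset[of "basisMat m ` basisIdx m"]
    unfolding basis by auto
qed

end
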